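(* Let $n\geq 1$. For $0\leq k\leq n-1$ let $A_{n,k}$ be the set of pairs of nonnegative integers $(i,j)$ such that $$i\geq \frac{k(k+1)}{2},\qquad j\geq \frac{(n-k-1)(n-k)}{2},\qquad i+j\leq \frac{n(n-1)}{2},$$ and let $A_n=\bigcup_{k=0}^{n-1}A_{n,k}$. Then there exists a Gog triangle of size $n$ with exactly $i$ inversions and exactly $j$ coinversions if and only if $(i,j)\in A_n$. Moreover, if $i=\frac{k(k+1)}{2}$ and $j=\frac{(n-k-1)(n-k)}{2}$ for some $k\in\{0,\dots,n-1\}$, then there is a unique Gog triangle of size $n$ with $i$ inversions and $j$ coinversions, and its bottom entry $X_{1,1}$ equals $n-k$.
   Context: A Gelfand–Tsetlin triangle of size $n$ is an array $X=(X_{i,j})_{n\geq i\geq j\geq 1}$ of positive integers (row $i$ consists of $X_{i,1},\dots,X_{i,i}$; row $n$ is the top row and row $1$, consisting of the single entry $X_{1,1}$, is the bottom) such that $X_{i+1,j}\leq X_{i,j}\leq X_{i+1,j+1}$ for all $n-1\geq i\geq j\geq 1$. A Gog triangle of size $n$ is a Gelfand–Tsetlin triangle of size $n$ whose rows are strictly increasing ($X_{i,j}<X_{i,j+1}$) and whose top row is $X_{n,j}=j$ for $1\leq j\leq n$. An inversion of a Gog triangle $X$ is a pair $(i,j)$ (with $n-1\geq i\geq j\geq 1$) such that $X_{i,j}=X_{i+1,j}$; a coinversion is a pair $(i,j)$ such that $X_{i,j}=X_{i+1,j+1}$. *)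

theory Defs
  imports Main
begin

(* A triangular array of size n is represented as X :: nat => nat => int, where
   X i j is the entry X_{i,j} for n >= i >= j >= 1. Entries outside this index
   range are normalised to 0, so that a triangle corresponds to exactly one function. *)

definition tri_idx :: "nat \<Rightarrow> (nat \<times> nat) set" where
  "tri_idx n = {(i, j). 1 \<le> j \<and> j \<le> i \<and> i \<le> n}"

definition gelfand_tsetlin :: "nat \<Rightarrow> (nat \<Rightarrow> nat \<Rightarrow> int) \<Rightarrow> bool" where
  "gelfand_tsetlin n X \<longleftrightarrow>
     (\<forall>i j. (i, j) \<notin> tri_idx n \<longrightarrow> X i j = 0) \<and>
     (\<forall>(i, j) \<in> tri_idx n. X i j > 0) \<and>
     (\<forall>i j. 1 \<le> j \<and> j \<le> i \<and> i \<le> n - 1 \<longrightarrow>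
        X (i + 1) j \<le> X i j \<and> X i j \<le> X (i + 1) (j + 1))"

definition gog :: "nat \<Rightarrow> (nat \<Rightarrow> nat \<Rightarrow> int) \<Rightarrow> bool" where
  "gog n X \<longleftrightarrow> gelfand_tsetlin n X \<and>
     (\<forall>i j. 1 \<le> j \<and> j < i \<and> i \<le> n \<longrightarrow> X i j < X i (j + 1)) \<and>
     (\<forall>j. 1 \<le> j \<and> j \<le> n \<longrightarrow> X n j = int j)"

definition inversions :: "nat \<Rightarrow> (nat \<Rightarrow> nat \<Rightarrow> int) \<Rightarrow> (nat \<times> nat) set" where
  "inversions n X = {(i, j). 1 \<le> j \<and> j \<le> i \<and> i \<le> n - 1 \<and> X i j = X (i + 1) j}"

definition coinversions :: "nat \<Rightarrow> (nat \<Rightarrow> nat \<Rightarrow> int) \<Rightarrow> (nat \<times> nat) set" where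
  "coinversions n X = {(i, j). 1 \<le> j \<and> j \<le> i \<and> i \<le> n - 1 \<and> X i j = X (i + 1) (j + 1)}"

(* A_{n,k}; note k(k+1)/2 etc. are exact integers *)
definition A_nk :: "nat \<Rightarrow> nat \<Rightarrow> (nat \<times> nat) set" where
  "A_nk n k = {(i, j). k * (k + 1) div 2 \<le> i \<and> (n - k - 1) * (n - k) div 2 \<le> j
                       \<and> i + j \<le> n * (n - 1) div 2}"

definition A_n :: "nat \<Rightarrow> (nat \<times> nat) set" where
  "A_n n = (\<Union>k \<in> {0..n-1}. A_nk n k)"

end

theory Submission
  imports Defs
begin

(*
  Along column j the entries X_{i,j} >= X_{i+1,j} >= ... >= X_{n,j} = j drop by at least one at
  every step that is not an inversion; along the diagonal through (i, j) they rise to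
  X_{n,n-i+j} = n-i+j by at least one at every step that is not a coinversion. Hence the
  inversions of column j and the coinversions of diagonal i-j in rows i..n number at least n-i.
  A staircase argument turns these local bounds into k(k+1)/2 inversions and (n-k-1)(n-k)/2
  coinversions for some k, and since no pair is both, the total is at most n(n-1)/2. When both
  counts are extremal every bound is tight, which forces X_{i,j} = j + min(n-i, n-1-k-(i-j)).

  Conversely, every point of A_n is realised by induction on n: prepending a column of ones (and
  raising the old entries by one) adds n-1 inversions, the reflection X_{i,j} -> n+1-X_{i,i+1-j}
  swaps inversions with coinversions, and the remaining points, close to a corner
  (k(k+1)/2, (n-k-1)(n-k)/2), are realised by triangles X_{i,j} = j + min(n-i, g(i-j), h(j)).
*)

section \<open>Triangular numbers and the staircase inequality\<close>

definition triangular :: "nat \<Rightarrow> nat" where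
  "triangular m = m * (m + 1) div 2"

lemma triangular_0 [simp]: "triangular 0 = 0"
  by (simp add: triangular_def)

lemma triangular_Suc: "triangular (Suc m) = triangular m + Suc m"
  unfolding triangular_def by (induction m) auto

lemma triangular_strict_mono: "strict_mono triangular"
  by (simp add: strict_mono_Suc_iff triangular_Suc)

lemma triangular_le_iff [simp]: "triangular a \<le> triangular b \<longleftrightarrow> a \<le> b"
  using triangular_strict_mono by (rule strict_mono_less_eq)

lemma triangular_add_le: "triangular a + triangular b \<le> triangular (a + b)"
  by (induction b) (simp_all add: triangular_Suc)

lemma sum_diff_eq_triangular: "k \<le> M \<Longrightarrow> (\<Sum>j<M. k - j) = triangular k"
proof (induction M)
  case (Suc M)
  show ?case
  proof (cases "k = Suc M")
    case True
    have "(\<Sum>j<Suc M. Suc M - j) = (\<Sum>j\<le>M. Suc M - j)"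
      by (simp add: lessThan_Suc_atMost)
    also have "\<dots> = (\<Sum>j\<le>M. Suc j)"
      by (rule sum.reindex_bij_witness[of _ "\<lambda>j. M - j" "\<lambda>j. M - j"]) auto
    also have "\<dots> = triangular (Suc M)"
      by (induction M) (simp_all add: triangular_Suc)
    finally show ?thesis using True by simp
  qed (use Suc in simp)
qed simp

lemma finite_staircase: "finite {(i, j). a + 1 \<le> j \<and> j + b \<le> i \<and> i \<le> a + b + (m :: nat)}"
  by (rule finite_subset[of _ "{..a + b + m} \<times> {..a + b + m}"]) auto

lemma card_staircase:
  "card {(i, j). a + 1 \<le> j \<and> j + b \<le> i \<and> i \<le> a + b + m} = triangular m"
proof (induction m)
  case 0
  have "{(i, j). a + 1 \<le> j \<and> j + b \<le> i \<and> i \<le> a + b + 0} = {}"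
    by auto
  then show ?case
    by (simp only: card.empty triangular_0)
next
  case (Suc m)
  let ?S = "\<lambda>m. {(i, j). a + 1 \<le> j \<and> j + b \<le> i \<and> i \<le> a + b + m}"
  have split: "?S (Suc m) = ?S m \<union> Pair (a + b + Suc m) ` {a + 1..a + Suc m}"
    by auto
  have "finite (?S m)"
    by (rule finite_staircase)
  moreover have "?S m \<inter> Pair (a + b + Suc m) ` {a + 1..a + Suc m} = {}"
    by auto
  ultimately have "card (?S (Suc m)) = card (?S m) + Suc m"
    unfolding split by (simp add: card_Un_disjoint card_image inj_on_def)
  then show ?case
    using Suc by (simp add: triangular_Suc)
qed

lemma staircase_split:
  fixes A B :: "nat \<Rightarrow> nat"
  assumes cover: "\<And>j d. j + d < M \<Longrightarrow> M - j - d \<le> A j + B d"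
  obtains K where "K \<le> M" "\<And>j. j < M \<Longrightarrow> K - j \<le> A j" "\<And>d. d < M \<Longrightarrow> M - K - d \<le> B d"
proof -
  define K where "K = Min (insert M ((\<lambda>j. A j + j) ` {..<M}))"
  have "K \<le> M" "\<And>j. j < M \<Longrightarrow> K \<le> A j + j"
    by (simp_all add: K_def)
  moreover have "M - K - d \<le> B d" if "d < M" for d
  proof -
    have "K \<in> insert M ((\<lambda>j. A j + j) ` {..<M})"
      unfolding K_def by (rule Min_in) auto
    then consider "K = M" | j where "j < M" "K = A j + j"
      by auto
    then show ?thesis
    proof cases
      case (2 j)
      show ?thesis
      proof (cases "j + d < M")
        case True
        then show ?thesis using cover[of j d] 2 by simp
      qed (use 2 in simp)
    qed simp
  qed
  ultimately show ?thesis
    by (intro that) force+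
qed

lemma triangular_le_sum:
  fixes A :: "nat \<Rightarrow> nat"
  assumes "K \<le> M" "\<And>j. j < M \<Longrightarrow> K - j \<le> A j"
  shows "triangular K \<le> (\<Sum>j<M. A j)"
proof -
  have "triangular K = (\<Sum>j<M. K - j)"
    using assms(1) by (simp add: sum_diff_eq_triangular)
  also have "\<dots> \<le> (\<Sum>j<M. A j)"
    using assms(2) by (intro sum_mono) simp
  finally show ?thesis .
qed

lemma staircase_sums_ge:
  fixes A B :: "nat \<Rightarrow> nat"
  assumes "\<And>j d. j + d < M \<Longrightarrow> M - j - d \<le> A j + B d"
  shows "\<exists>k\<le>M. triangular k \<le> (\<Sum>j<M. A j) \<and> triangular (M - k) \<le> (\<Sum>d<M. B d)"
proof -
  obtain K where K: "K \<le> M" "\<And>j. j < M \<Longrightarrow> K - j \<le> A j" "\<And>d. d < M \<Longrightarrow> M - K - d \<le> B d"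
    using staircase_split assms by blast
  then show ?thesis
    by (intro exI[of _ K]) (simp add: triangular_le_sum)
qed

lemma staircase_sums_eq:
  fixes A B :: "nat \<Rightarrow> nat"
  assumes "\<And>j d. j + d < M \<Longrightarrow> M - j - d \<le> A j + B d"
    and "k \<le> M" and sum_A: "(\<Sum>j<M. A j) = triangular k" and sum_B: "(\<Sum>d<M. B d) = triangular (M - k)"
  shows "\<And>j. j < M \<Longrightarrow> A j = k - j" and "\<And>d. d < M \<Longrightarrow> B d = M - k - d"
proof -
  obtain K where K: "K \<le> M" "\<And>j. j < M \<Longrightarrow> K - j \<le> A j" "\<And>d. d < M \<Longrightarrow> M - K - d \<le> B d"
    using staircase_split assms(1) by blast
  have "K \<le> k" "M - K \<le> M - k"
    using triangular_le_sum[of K M A] triangular_le_sum[of "M - K" M B] K sum_A sum_B by simp_all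
  then have "K = k"
    using K(1) \<open>k \<le> M\<close> by linarith
  show "A j = k - j" if "j < M" for j
    using sum_mono_inv[of "\<lambda>j. k - j" "{..<M}" A j] K(2) that
    by (simp add: \<open>K = k\<close> sum_A sum_diff_eq_triangular \<open>k \<le> M\<close>)
  show "B d = M - k - d" if "d < M" for d
    using sum_mono_inv[of "\<lambda>d. M - k - d" "{..<M}" B d] K(3) that
      sum_diff_eq_triangular[of "M - k" M]
    by (simp add: \<open>K = k\<close> sum_B)
qed

lemma gog_intro:
  assumes "\<And>i j. (i, j) \<notin> tri_idx n \<Longrightarrow> X i j = 0"
    and "\<And>i j. 1 \<le> j \<Longrightarrow> j \<le> i \<Longrightarrow> i \<le> n \<Longrightarrow> 0 < X i j"
    and "\<And>i j. 1 \<le> j \<Longrightarrow> j \<le> i \<Longrightarrow> i < n \<Longrightarrow> X (i + 1) j \<le> X i j"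
    and "\<And>i j. 1 \<le> j \<Longrightarrow> j \<le> i \<Longrightarrow> i < n \<Longrightarrow> X i j \<le> X (i + 1) (j + 1)"
    and "\<And>i j. 1 \<le> j \<Longrightarrow> j < i \<Longrightarrow> i \<le> n \<Longrightarrow> X i j < X i (j + 1)"
    and "\<And>j. 1 \<le> j \<Longrightarrow> j \<le> n \<Longrightarrow> X n j = int j"
  shows "gog n X"
  using assms unfolding gog_def gelfand_tsetlin_def tri_idx_def by auto

context
  fixes n :: nat and X :: "nat \<Rightarrow> nat \<Rightarrow> int"
  assumes gog: "gog n X"
begin

lemma gog_outside: "(i, j) \<notin> tri_idx n \<Longrightarrow> X i j = 0"
  using gog unfolding gog_def gelfand_tsetlin_def by blast

lemma gog_pos: "1 \<le> j \<Longrightarrow> j \<le> i \<Longrightarrow> i \<le> n \<Longrightarrow> 0 < X i j"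
  using gog unfolding gog_def gelfand_tsetlin_def tri_idx_def by blast

lemma gog_le_above: "1 \<le> j \<Longrightarrow> j \<le> i \<Longrightarrow> i < n \<Longrightarrow> X (i + 1) j \<le> X i j"
  using gog unfolding gog_def gelfand_tsetlin_def by simp

lemma gog_le_above_right: "1 \<le> j \<Longrightarrow> j \<le> i \<Longrightarrow> i < n \<Longrightarrow> X i j \<le> X (i + 1) (j + 1)"
  using gog unfolding gog_def gelfand_tsetlin_def by simp

lemma gog_row_less: "1 \<le> j \<Longrightarrow> j < i \<Longrightarrow> i \<le> n \<Longrightarrow> X i j < X i (j + 1)"
  using gog unfolding gog_def by blast

lemma gog_top_row: "1 \<le> j \<Longrightarrow> j \<le> n \<Longrightarrow> X n j = int j"
  using gog unfolding gog_def by blast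

lemma gog_bounds:
  assumes "i \<le> n" "1 \<le> j" "j \<le> i"
  shows "int j \<le> X i j \<and> X i j \<le> int (n - i + j)"
  using assms
proof (induction i arbitrary: j rule: inc_induct)
  case base
  then show ?case
    by (simp add: gog_top_row)
next
  case (step i)
  have "int j \<le> X (i + 1) j" "X (i + 1) (j + 1) \<le> int (n - (i + 1) + (j + 1))"
    using step.IH[of j] step.IH[of "j + 1"] step.prems by simp_all
  moreover have "X (i + 1) j \<le> X i j" "X i j \<le> X (i + 1) (j + 1)"
    using gog_le_above gog_le_above_right step by simp_all
  ultimately show ?case
    using step.hyps by simp
qed

lemma inversions_coinversions_disjoint: "inversions n X \<inter> coinversions n X = {}"
proof -
  have "X i j \<noteq> X (i + 1) j \<or> X i j \<noteq> X (i + 1) (j + 1)" if "1 \<le> j" "j \<le> i" "i < n" for i j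
    using gog_row_less[of j "i + 1"] that by auto
  then show ?thesis
    unfolding inversions_def coinversions_def by fastforce
qed

end

lemma finite_inversions [simp]: "finite (inversions n X)"
  by (rule finite_subset[of _ "{..n} \<times> {..n}"]) (auto simp: inversions_def)

lemma finite_coinversions [simp]: "finite (coinversions n X)"
  by (rule finite_subset[of _ "{..n} \<times> {..n}"]) (auto simp: coinversions_def)

lemma card_inversions_plus_coinversions_le:
  assumes "gog n X"
  shows "card (inversions n X) + card (coinversions n X) \<le> triangular (n - 1)"
proof -
  let ?T = "{(i, j). 1 \<le> j \<and> j \<le> i \<and> i \<le> n - 1}"
  have "card (inversions n X) + card (coinversions n X) = card (inversions n X \<union> coinversions n X)"
    using inversions_coinversions_disjoint[OF assms] by (simp add: card_Un_disjoint)
  also have "\<dots> \<le> card ?T"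
  proof (rule card_mono)
    show "finite ?T"
      using finite_staircase[of 0 0 "n - 1"] by simp
    show "inversions n X \<union> coinversions n X \<subseteq> ?T"
      unfolding inversions_def coinversions_def by auto
  qed
  also have "\<dots> = triangular (n - 1)"
    using card_staircase[of 0 0 "n - 1"] by simp
  finally show ?thesis .
qed

section \<open>Inversions along columns, coinversions along diagonals\<close>

definition flat_steps :: "(nat \<Rightarrow> int) \<Rightarrow> nat \<Rightarrow> nat \<Rightarrow> nat set" where
  "flat_steps f a b = {r. a \<le> r \<and> r < b \<and> f r = f (r + 1)}"

lemma finite_flat_steps [simp]: "finite (flat_steps f a b)"
  by (rule finite_subset[of _ "{..<b}"]) (auto simp: flat_steps_def)

lemma flat_steps_uminus [simp]: "flat_steps (\<lambda>r. - f r) a b = flat_steps f a b"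
  by (simp add: flat_steps_def)

lemma card_flat_steps_anti_mono: "a' \<le> a \<Longrightarrow> card (flat_steps f a b) \<le> card (flat_steps f a' b)"
  by (rule card_mono) (auto simp: flat_steps_def)

lemma card_flat_steps_ge:
  fixes f :: "nat \<Rightarrow> int"
  assumes "a \<le> b" and "\<And>r. a \<le> r \<Longrightarrow> r < b \<Longrightarrow> f r \<le> f (r + 1)"
  shows "int (b - a) \<le> int (card (flat_steps f a b)) + f b - f a"
  using \<open>a \<le> b\<close>
proof (induction a rule: inc_induct)
  case (step a)
  have "a \<notin> flat_steps f (a + 1) b"
    by (simp add: flat_steps_def)
  moreover have "f a \<le> f (a + 1)"
    using assms(2) step.hyps by simp
  moreover have "flat_steps f a b =
      (if f a = f (a + 1) then insert a (flat_steps f (a + 1) b) else flat_steps f (a + 1) b)"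
    using step.hyps by (auto simp: flat_steps_def Suc_le_eq order.order_iff_strict)
  ultimately show ?case
    using step.IH step.hyps by (cases "f a = f (a + 1)") simp_all
qed (simp add: flat_steps_def)

context
  fixes n :: nat and X :: "nat \<Rightarrow> nat \<Rightarrow> int"
  assumes gog: "gog n X"
begin

lemma gog_column_bound:
  assumes "1 \<le> j" "j \<le> i" "i \<le> n"
  shows "int (n - i) \<le> int (card (flat_steps (\<lambda>r. X r j) i n)) + X i j - int j"
  using card_flat_steps_ge[of i n "\<lambda>r. - X r j"] gog_le_above[OF gog] gog_top_row[OF gog] assms
  by simp

lemma gog_diagonal_bound:
  assumes "1 \<le> c" "c + d \<le> n"
  shows "X (c + d) c - int c \<le> int (card (flat_steps (\<lambda>r. X (r + d) r) c (n - d)))"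
proof -
  have "c \<le> n - d" "1 \<le> n - d" "n - d + d = n"
    using assms by simp_all
  moreover have "X (r + d) r \<le> X (r + 1 + d) (r + 1)" if "c \<le> r" "r < n - d" for r
    using gog_le_above_right[OF gog, of r "r + d"] that assms by simp
  ultimately show ?thesis
    using card_flat_steps_ge[of c "n - d" "\<lambda>r. X (r + d) r"] gog_top_row[OF gog, of "n - d"]
    by simp
qed

lemma card_inversions_by_columns:
  "card (inversions n X) = (\<Sum>j<n - 1. card (flat_steps (\<lambda>r. X r (j + 1)) (j + 1) n))"
proof -
  have "inversions n X =
      (\<lambda>(j, r). (r, j + 1)) ` (SIGMA j:{..<n - 1}. flat_steps (\<lambda>r. X r (j + 1)) (j + 1) n)"
  proof (intro equalityI subsetI)
    fix p assume "p \<in> inversions n X"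
    then obtain i j where "p = (i, j)" "1 \<le> j" "j \<le> i" "i < n" "X i j = X (i + 1) j"
      by (auto simp: inversions_def)
    then show "p \<in> (\<lambda>(j, r). (r, j + 1)) ` (SIGMA j:{..<n - 1}. flat_steps (\<lambda>r. X r (j + 1)) (j + 1) n)"
      by (intro rev_image_eqI[of "(j - 1, i)"]) (auto simp: flat_steps_def)
  qed (auto simp: inversions_def flat_steps_def)
  moreover have "inj_on (\<lambda>(j, r). (r, j + 1)) (SIGMA j:{..<n - 1}. flat_steps (\<lambda>r. X r (j + 1)) (j + 1) n)"
    by (auto simp: inj_on_def)
  ultimately show ?thesis
    by (simp add: card_image card_SigmaI)
qed

lemma card_coinversions_by_diagonals:
  "card (coinversions n X) = (\<Sum>d<n - 1. card (flat_steps (\<lambda>r. X (r + d) r) 1 (n - d)))"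
proof -
  have "coinversions n X =
      (\<lambda>(d, r). (r + d, r)) ` (SIGMA d:{..<n - 1}. flat_steps (\<lambda>r. X (r + d) r) 1 (n - d))"
  proof (intro equalityI subsetI)
    fix p assume "p \<in> coinversions n X"
    then obtain i j where "p = (i, j)" "1 \<le> j" "j \<le> i" "i < n" "X i j = X (i + 1) (j + 1)"
      by (auto simp: coinversions_def)
    then show "p \<in> (\<lambda>(d, r). (r + d, r)) ` (SIGMA d:{..<n - 1}. flat_steps (\<lambda>r. X (r + d) r) 1 (n - d))"
      by (intro rev_image_eqI[of "(i - j, j)"]) (auto simp: flat_steps_def)
  qed (auto simp: coinversions_def flat_steps_def)
  moreover have "inj_on (\<lambda>(d, r). (r + d, r)) (SIGMA d:{..<n - 1}. flat_steps (\<lambda>r. X (r + d) r) 1 (n - d))"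
    by (auto simp: inj_on_def)
  ultimately show ?thesis
    by (simp add: card_image card_SigmaI)
qed

lemma column_plus_diagonal_flat_steps_ge:
  assumes "j + d < n - 1"
  shows "n - 1 - j - d \<le>
    card (flat_steps (\<lambda>r. X r (j + 1)) (j + 1) n) + card (flat_steps (\<lambda>r. X (r + d) r) 1 (n - d))"
proof -
  let ?i = "j + 1 + d"
  have "int (n - ?i) \<le> int (card (flat_steps (\<lambda>r. X r (j + 1)) ?i n)) + X ?i (j + 1) - int (j + 1)"
    using gog_column_bound[of "j + 1" ?i] assms by simp
  moreover have "X ?i (j + 1) - int (j + 1) \<le> int (card (flat_steps (\<lambda>r. X (r + d) r) (j + 1) (n - d)))"
    using gog_diagonal_bound[of "j + 1" d] assms by (simp add: ac_simps)
  moreover have "card (flat_steps (\<lambda>r. X r (j + 1)) ?i n) \<le> card (flat_steps (\<lambda>r. X r (j + 1)) (j + 1) n)"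
    "card (flat_steps (\<lambda>r. X (r + d) r) (j + 1) (n - d)) \<le> card (flat_steps (\<lambda>r. X (r + d) r) 1 (n - d))"
    by (simp_all add: card_flat_steps_anti_mono)
  ultimately show ?thesis
    by linarith
qed

lemma gog_counts_ge_corner:
  "\<exists>k\<le>n - 1. triangular k \<le> card (inversions n X) \<and> triangular (n - 1 - k) \<le> card (coinversions n X)"
  unfolding card_inversions_by_columns card_coinversions_by_diagonals
  by (rule staircase_sums_ge) (rule column_plus_diagonal_flat_steps_ge)

end

lemma triangular_diff_eq: "k < n \<Longrightarrow> (n - k - 1) * (n - k) div 2 = triangular (n - 1 - k)"
  by (simp add: triangular_def Suc_diff_Suc mult.commute)

lemma mem_A_n_iff:
  assumes "1 \<le> n"
  shows "(p, q) \<in> A_n n \<longleftrightarrow>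
    (\<exists>k<n. triangular k \<le> p \<and> triangular (n - 1 - k) \<le> q \<and> p + q \<le> triangular (n - 1))"
proof -
  have "A_nk n k = {(p, q). triangular k \<le> p \<and> triangular (n - 1 - k) \<le> q \<and> p + q \<le> triangular (n - 1)}"
    if k: "k < n" for k
  proof -
    have "k * (k + 1) div 2 = triangular k" "n * (n - 1) div 2 = triangular (n - 1)"
      using triangular_diff_eq[of 0 n] k by (simp_all add: triangular_def mult.commute)
    then show ?thesis
      unfolding A_nk_def triangular_diff_eq[OF k] by (simp only:)
  qed
  moreover have "{0..n - 1} = {..<n}"
    using assms by auto
  ultimately show ?thesis
    unfolding A_n_def by auto
qed

lemma gog_counts_mem_A_n:
  assumes "gog n X" "1 \<le> n"
  shows "(card (inversions n X), card (coinversions n X)) \<in> A_n n"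
proof -
  obtain k where "k \<le> n - 1" "triangular k \<le> card (inversions n X)"
      "triangular (n - 1 - k) \<le> card (coinversions n X)"
    using gog_counts_ge_corner[OF assms(1)] by blast
  then show ?thesis
    unfolding mem_A_n_iff[OF assms(2)]
    using card_inversions_plus_coinversions_le[OF assms(1)] assms(2)
    by (intro exI[of _ k]) auto
qed

section \<open>Capped triangles and the corner triangle\<close>

definition cap_triangle :: "nat \<Rightarrow> (nat \<Rightarrow> nat) \<Rightarrow> (nat \<Rightarrow> nat) \<Rightarrow> nat \<Rightarrow> nat \<Rightarrow> int" where
  "cap_triangle n g h i j =
     (if (i, j) \<in> tri_idx n then int j + int (min (n - i) (min (g (i - j)) (h j))) else 0)"

lemma cap_triangle_gog:
  assumes g: "antimono g" and h: "mono h"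
  shows "gog n (cap_triangle n g h)"
proof (rule gog_intro)
  let ?X = "cap_triangle n g h"
  show "?X i j = 0" if "(i, j) \<notin> tri_idx n" for i j
    using that by (simp add: cap_triangle_def)
  show "0 < ?X i j" if "1 \<le> j" "j \<le> i" "i \<le> n" for i j
    using that by (simp add: cap_triangle_def tri_idx_def)
  show "?X (i + 1) j \<le> ?X i j" if "1 \<le> j" "j \<le> i" "i < n" for i j
  proof -
    have "g (Suc (i - j)) \<le> g (i - j)"
      using g by (simp add: antimonoD)
    then have "min (n - (i + 1)) (min (g (i + 1 - j)) (h j)) \<le> min (n - i) (min (g (i - j)) (h j))"
      using that by (intro min.mono) (simp_all add: Suc_diff_le)
    then show ?thesis
      using that by (simp add: cap_triangle_def tri_idx_def)
  qed
  show "?X i j \<le> ?X (i + 1) (j + 1)" if "1 \<le> j" "j \<le> i" "i < n" for i j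
    using that monoD[OF h, of j "j + 1"] by (auto simp: cap_triangle_def tri_idx_def min_def)
  show "?X i j < ?X i (j + 1)" if "1 \<le> j" "j < i" "i \<le> n" for i j
  proof -
    have "g (i - j) \<le> g (i - (j + 1))" "h j \<le> h (j + 1)"
      using that antimonoD[OF g] monoD[OF h] by simp_all
    then show ?thesis
      using that by (auto simp: cap_triangle_def tri_idx_def min_def)
  qed
  show "?X n j = int j" if "1 \<le> j" "j \<le> n" for j
    using that by (simp add: cap_triangle_def tri_idx_def)
qed

lemma cap_triangle_inversion_iff:
  assumes g: "antimono g"
  shows "(i, j) \<in> inversions n (cap_triangle n g h) \<longleftrightarrow> 1 \<le> j \<and> j \<le> i \<and> i < n \<and>
     min (g (i - j)) (h j) < n - i \<and> min (g (i - j)) (h j) \<le> g (Suc (i - j))"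
proof (cases "1 \<le> j \<and> j \<le> i \<and> i < n")
  case True
  then have "1 \<le> j" "j \<le> i" "i < n" "i \<le> n - 1"
    by auto
  have min_iff: "min N (min a c) = min (N - 1) (min b c) \<longleftrightarrow> min a c < N \<and> min a c \<le> b"
    if "0 < N" "b \<le> a" for N a b c :: nat
    using that by (auto simp: min_def)
  have "g (Suc (i - j)) \<le> g (i - j)"
    using g by (simp add: antimonoD)
  moreover have "i + 1 - j = Suc (i - j)" "n - (i + 1) = n - i - 1"
    using \<open>j \<le> i\<close> by (simp_all add: Suc_diff_le)
  ultimately show ?thesis
    using \<open>1 \<le> j\<close> \<open>j \<le> i\<close> \<open>i < n\<close> \<open>i \<le> n - 1\<close> min_iff[of "n - i" "g (Suc (i - j))" "g (i - j)" "h j"]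
    by (simp add: inversions_def cap_triangle_def tri_idx_def)
qed (auto simp: inversions_def)

lemma cap_triangle_coinversion_iff:
  assumes h: "mono h"
  shows "(i, j) \<in> coinversions n (cap_triangle n g h) \<longleftrightarrow> 1 \<le> j \<and> j \<le> i \<and> i < n \<and>
     n - i \<le> g (i - j) \<and> n - i \<le> h j"
proof (cases "1 \<le> j \<and> j \<le> i \<and> i < n")
  case True
  then have "1 \<le> j" "j \<le> i" "i < n" "i \<le> n - 1"
    by auto
  have min_iff: "int (min N (min a c)) = 1 + int (min (N - 1) (min a c')) \<longleftrightarrow> N \<le> a \<and> N \<le> c"
    if "0 < N" "c \<le> c'" for N a c c' :: nat
    using that by (auto simp: min_def)
  have "h j \<le> h (Suc j)"
    using h by (simp add: monoD)
  moreover have "n - (i + 1) = n - i - 1"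
    by simp
  ultimately show ?thesis
    using \<open>1 \<le> j\<close> \<open>j \<le> i\<close> \<open>i < n\<close> \<open>i \<le> n - 1\<close> min_iff[of "n - i" "h j" "h (Suc j)" "g (i - j)"]
    by (simp add: coinversions_def cap_triangle_def tri_idx_def)
qed (auto simp: coinversions_def)

definition corner_triangle :: "nat \<Rightarrow> nat \<Rightarrow> nat \<Rightarrow> nat \<Rightarrow> int" where
  "corner_triangle n k = cap_triangle n (\<lambda>d. n - 1 - k - d) (\<lambda>_. n)"

lemma corner_triangle_gog: "gog n (corner_triangle n k)"
  unfolding corner_triangle_def by (rule cap_triangle_gog) (auto intro: antimonoI monoI)

lemma corner_triangle_bottom: "k < n \<Longrightarrow> corner_triangle n k 1 1 = int (n - k)"
  by (simp add: corner_triangle_def cap_triangle_def tri_idx_def)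

lemma corner_counts_flat_steps:
  assumes gog: "gog n X" and "k < n"
    and inv: "card (inversions n X) = triangular k"
    and coinv: "card (coinversions n X) = triangular (n - 1 - k)"
  shows "\<And>j. 1 \<le> j \<Longrightarrow> j < n \<Longrightarrow> card (flat_steps (\<lambda>r. X r j) j n) = k + 1 - j"
    and "\<And>d. d < n - 1 \<Longrightarrow> card (flat_steps (\<lambda>r. X (r + d) r) 1 (n - d)) = n - 1 - k - d"
proof -
  note staircase = staircase_sums_eq[OF column_plus_diagonal_flat_steps_ge[OF gog] _
      inv[unfolded card_inversions_by_columns[OF gog]]
      coinv[unfolded card_coinversions_by_diagonals[OF gog]]]
  show "card (flat_steps (\<lambda>r. X r j) j n) = k + 1 - j" if "1 \<le> j" "j < n" for j
    using staircase(1)[of "j - 1"] \<open>k < n\<close> that by simp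
  show "card (flat_steps (\<lambda>r. X (r + d) r) 1 (n - d)) = n - 1 - k - d" if "d < n - 1" for d
    using staircase(2)[of d] \<open>k < n\<close> that by simp
qed

lemma gog_eq_corner_triangle:
  assumes gog: "gog n X" and "k < n"
    and inv: "card (inversions n X) = triangular k"
    and coinv: "card (coinversions n X) = triangular (n - 1 - k)"
  shows "X = corner_triangle n k"
proof (intro ext)
  fix i j
  show "X i j = corner_triangle n k i j"
  proof (cases "(i, j) \<in> tri_idx n \<and> i < n")
    case True
    then have ij: "1 \<le> j" "j \<le> i" "i < n"
      by (auto simp: tri_idx_def)
    have "int (n - i) \<le> int (card (flat_steps (\<lambda>r. X r j) i n)) + X i j - int j"
      using gog_column_bound[OF gog] ij by simp
    moreover have "card (flat_steps (\<lambda>r. X r j) i n) \<le> k + 1 - j"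
      using card_flat_steps_anti_mono[of j i "\<lambda>r. X r j" n] corner_counts_flat_steps(1)[OF assms, of j] ij by simp
    moreover have "X i j - int j \<le> int (card (flat_steps (\<lambda>r. X (r + (i - j)) r) j (n - (i - j))))"
      using gog_diagonal_bound[OF gog, of j "i - j"] ij by simp
    moreover have "card (flat_steps (\<lambda>r. X (r + (i - j)) r) j (n - (i - j))) \<le> n - 1 - k - (i - j)"
    proof -
      have "i - j < n - 1"
        using ij by linarith
      then show ?thesis
        using card_flat_steps_anti_mono[OF \<open>1 \<le> j\<close>, of "\<lambda>r. X (r + (i - j)) r" "n - (i - j)"]
          corner_counts_flat_steps(2)[OF assms] by simp
    qed
    moreover have "int j \<le> X i j \<and> X i j \<le> int (n - i + j)"
      using gog_bounds[OF gog] ij by simp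
    ultimately show ?thesis
      using ij by (simp add: corner_triangle_def cap_triangle_def tri_idx_def) linarith
  next
    case False
    then show ?thesis
      using gog_outside[OF gog] gog_top_row[OF gog]
      by (auto simp: corner_triangle_def cap_triangle_def tri_idx_def)
  qed
qed

section \<open>Realising every point of \<open>A_n\<close>\<close>

definition extend_left :: "nat \<Rightarrow> (nat \<Rightarrow> nat \<Rightarrow> int) \<Rightarrow> nat \<Rightarrow> nat \<Rightarrow> int" where
  "extend_left m Y i j =
     (if (i, j) \<in> tri_idx (Suc m) then if j = 1 then 1 else Y (i - 1) (j - 1) + 1 else 0)"

lemma extend_left_gog:
  assumes Y: "gog m Y"
  shows "gog (Suc m) (extend_left m Y)"
proof (rule gog_intro)
  let ?X = "extend_left m Y"
  show "?X i j = 0" if "(i, j) \<notin> tri_idx (Suc m)" for i j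
    using that by (simp add: extend_left_def)
  show "0 < ?X i j" if "1 \<le> j" "j \<le> i" "i \<le> Suc m" for i j
  proof (cases "j = 1")
    case False
    then have "0 < Y (i - 1) (j - 1)"
      using that by (intro gog_pos[OF Y]) auto
    then show ?thesis
      using that by (simp add: extend_left_def tri_idx_def)
  qed (use that in \<open>simp add: extend_left_def tri_idx_def\<close>)
  show "?X (i + 1) j \<le> ?X i j" if "1 \<le> j" "j \<le> i" "i < Suc m" for i j
    using that gog_le_above[OF Y, of "j - 1" "i - 1"] by (simp add: extend_left_def tri_idx_def)
  show "?X i j \<le> ?X (i + 1) (j + 1)" if "1 \<le> j" "j \<le> i" "i < Suc m" for i j
    using that gog_pos[OF Y, of 1 i] gog_le_above_right[OF Y, of "j - 1" "i - 1"]
    by (simp add: extend_left_def tri_idx_def)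
  show "?X i j < ?X i (j + 1)" if "1 \<le> j" "j < i" "i \<le> Suc m" for i j
  proof (cases "j = 1")
    case True
    have "0 < Y (i - 1) 1"
      using that by (intro gog_pos[OF Y]) auto
    then show ?thesis
      using that True by (simp add: extend_left_def tri_idx_def)
  next
    case False
    have "Y (i - 1) (j - 1) < Y (i - 1) (j - 1 + 1)"
      using that False by (intro gog_row_less[OF Y]) auto
    then show ?thesis
      using that False by (simp add: extend_left_def tri_idx_def)
  qed
  show "?X (Suc m) j = int j" if "1 \<le> j" "j \<le> Suc m" for j
    using that gog_top_row[OF Y, of "j - 1"] by (simp add: extend_left_def tri_idx_def)
qed

lemma card_inversions_extend_left:
  "card (inversions (Suc m) (extend_left m Y)) = m + card (inversions m Y)"
proof -
  let ?shift = "\<lambda>(i, j). (i + 1, j + 1) :: nat \<times> nat"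
  have "inversions (Suc m) (extend_left m Y) = (\<lambda>i. (i, 1)) ` {1..m} \<union> ?shift ` inversions m Y"
  proof (intro equalityI subsetI)
    fix p assume "p \<in> inversions (Suc m) (extend_left m Y)"
    then obtain i j where p: "p = (i, j)" "1 \<le> j" "j \<le> i" "i < Suc m"
        and eq: "extend_left m Y i j = extend_left m Y (i + 1) j"
      by (auto simp: inversions_def)
    show "p \<in> (\<lambda>i. (i, 1)) ` {1..m} \<union> ?shift ` inversions m Y"
    proof (cases "j = 1")
      case False
      then have "(i - 1, j - 1) \<in> inversions m Y"
        using p eq by (auto simp: inversions_def extend_left_def tri_idx_def)
      then show ?thesis
        using p False by (intro UnI2 rev_image_eqI[of "(i - 1, j - 1)"]) auto
    qed (use p in auto)
  qed (auto simp: inversions_def extend_left_def tri_idx_def)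
  moreover have "inj ?shift" "(\<lambda>i. (i, 1)) ` {1..m} \<inter> ?shift ` inversions m Y = {}"
    by (auto simp: inj_def inversions_def)
  moreover have "card ((\<lambda>i. (i, 1 :: nat)) ` {1..m}) = m"
    by (simp add: card_image inj_on_def)
  ultimately show ?thesis
    by (simp add: card_Un_disjoint card_image inj_on_subset)
qed

lemma card_coinversions_extend_left:
  assumes Y: "gog m Y"
  shows "card (coinversions (Suc m) (extend_left m Y)) = card (coinversions m Y)"
proof -
  let ?shift = "\<lambda>(i, j). (i + 1, j + 1) :: nat \<times> nat"
  have "coinversions (Suc m) (extend_left m Y) = ?shift ` coinversions m Y"
  proof (intro equalityI subsetI)
    fix p assume "p \<in> coinversions (Suc m) (extend_left m Y)"
    then obtain i j where p: "p = (i, j)" "1 \<le> j" "j \<le> i" "i < Suc m"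
        and eq: "extend_left m Y i j = extend_left m Y (i + 1) (j + 1)"
      by (auto simp: coinversions_def)
    have "j \<noteq> 1"
      using gog_pos[OF Y, of 1 i] p eq by (auto simp: extend_left_def tri_idx_def)
    then have "(i - 1, j - 1) \<in> coinversions m Y"
      using p eq by (auto simp: coinversions_def extend_left_def tri_idx_def)
    then show "p \<in> ?shift ` coinversions m Y"
      using p \<open>j \<noteq> 1\<close> by (intro rev_image_eqI[of "(i - 1, j - 1)"]) auto
  qed (auto simp: coinversions_def extend_left_def tri_idx_def)
  moreover have "inj ?shift"
    by (auto simp: inj_def)
  ultimately show ?thesis
    by (simp add: card_image inj_on_subset)
qed

definition reflect :: "nat \<Rightarrow> (nat \<Rightarrow> nat \<Rightarrow> int) \<Rightarrow> nat \<Rightarrow> nat \<Rightarrow> int" where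
  "reflect n X i j = (if (i, j) \<in> tri_idx n then int n + 1 - X i (i + 1 - j) else 0)"

lemma reflect_gog:
  assumes X: "gog n X"
  shows "gog n (reflect n X)"
proof (rule gog_intro)
  let ?Y = "reflect n X"
  show "?Y i j = 0" if "(i, j) \<notin> tri_idx n" for i j
    using that by (simp add: reflect_def)
  show "0 < ?Y i j" if "1 \<le> j" "j \<le> i" "i \<le> n" for i j
  proof -
    have "X i (i + 1 - j) \<le> int (n - i + (i + 1 - j))"
      using that by (intro conjunct2[OF gog_bounds[OF X]]) auto
    then show ?thesis
      using that by (simp add: reflect_def tri_idx_def)
  qed
  show "?Y (i + 1) j \<le> ?Y i j" if "1 \<le> j" "j \<le> i" "i < n" for i j
    using that gog_le_above_right[OF X, of "i + 1 - j" i] by (simp add: reflect_def tri_idx_def Suc_diff_le)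
  show "?Y i j \<le> ?Y (i + 1) (j + 1)" if "1 \<le> j" "j \<le> i" "i < n" for i j
    using that gog_le_above[OF X, of "i + 1 - j" i] by (simp add: reflect_def tri_idx_def)
  show "?Y i j < ?Y i (j + 1)" if "1 \<le> j" "j < i" "i \<le> n" for i j
    using that gog_row_less[OF X, of "i - j" i] by (simp add: reflect_def tri_idx_def Suc_diff_le)
  show "?Y n j = int j" if "1 \<le> j" "j \<le> n" for j
    using that gog_top_row[OF X, of "n + 1 - j"] by (simp add: reflect_def tri_idx_def)
qed

lemma card_row_reversal:
  fixes S :: "(nat \<times> nat) set"
  assumes "S \<subseteq> {(i, j). 1 \<le> j \<and> j \<le> i}"
  shows "card {(i, j). j \<le> i \<and> (i, i + 1 - j) \<in> S} = card S"
proof -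
  have "{(i, j). j \<le> i \<and> (i, i + 1 - j) \<in> S} = (\<lambda>(i, j). (i, i + 1 - j)) ` S"
  proof (intro equalityI subsetI)
    fix p assume "p \<in> {(i, j). j \<le> i \<and> (i, i + 1 - j) \<in> S}"
    then obtain i j where "p = (i, j)" "j \<le> i" "(i, i + 1 - j) \<in> S"
      by auto
    moreover have "i + 1 - (i + 1 - j) = j"
      using \<open>j \<le> i\<close> by simp
    ultimately show "p \<in> (\<lambda>(i, j). (i, i + 1 - j)) ` S"
      by (intro rev_image_eqI[of "(i, i + 1 - j)"]) auto
  qed (use assms in auto)
  moreover have "inj_on (\<lambda>(i, j). (i, i + 1 - j)) S"
    using assms by (auto simp: inj_on_def)
  ultimately show ?thesis
    by (simp add: card_image)
qed

lemma card_inversions_reflect: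
  "card (inversions n (reflect n X)) = card (coinversions n X)"
proof -
  have "inversions n (reflect n X) = {(i, j). j \<le> i \<and> (i, i + 1 - j) \<in> coinversions n X}"
    by (auto simp: inversions_def coinversions_def reflect_def tri_idx_def Suc_diff_le)
  then show ?thesis
    by (simp only:) (rule card_row_reversal, auto simp: coinversions_def)
qed

lemma card_coinversions_reflect:
  "card (coinversions n (reflect n X)) = card (inversions n X)"
proof -
  have "coinversions n (reflect n X) = {(i, j). j \<le> i \<and> (i, i + 1 - j) \<in> inversions n X}"
    by (auto simp: inversions_def coinversions_def reflect_def tri_idx_def Suc_diff_le)
  then show ?thesis
    by (simp only:) (rule card_row_reversal, auto simp: inversions_def)
qed

lemma near_corner_gog_exists:
  assumes "x < n - 1 - k" "y < k"
  shows "\<exists>X. gog n X \<and> card (inversions n X) = triangular k + x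
                     \<and> card (coinversions n X) = triangular (n - 1 - k) + y"
proof -
  define L where "L = n - 1 - k"
  have "n = L + k + 1" "x < L" "y < k"
    using assms by (auto simp: L_def)
  define g where "g d = L - d + (if d = 0 then y else 0)" for d
  define h where "h j = (if j \<le> 1 then L - x else L + y)" for j :: nat
  have g: "antimono g" and h: "mono h"
    by (auto simp: g_def h_def intro!: antimonoI monoI)
  \<comment> \<open>A perturbation of the corner triangle, where \<open>g d = L - d\<close>: capping column 1 at \<open>L - x\<close>
      creates the \<open>x\<close> inversions \<open>(i, 1)\<close> with \<open>i \<le> x\<close>, and raising \<open>g 0\<close> by \<open>y\<close> creates the \<open>y\<close>
      coinversions \<open>(i, i)\<close> with \<open>k - y < i \<le> k\<close>.\<close>
  let ?X = "cap_triangle n g h"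
  let ?I = "{(i, j). 1 \<le> j \<and> j + L \<le> i \<and> i \<le> L + k}"
  let ?C = "{(i, j). k + 1 \<le> j \<and> j \<le> i \<and> i \<le> k + L}"
  have inv: "inversions n ?X = ?I \<union> (\<lambda>i. (i, 1)) ` {1..x}"
  proof (rule set_eqI, clarify)
    fix i j :: nat
    show "(i, j) \<in> inversions n ?X \<longleftrightarrow> (i, j) \<in> ?I \<union> (\<lambda>i. (i, 1)) ` {1..x}"
      unfolding cap_triangle_inversion_iff[OF g] using \<open>n = L + k + 1\<close> \<open>x < L\<close> \<open>y < k\<close>
      by (cases "j = 1") (auto simp: g_def h_def min_def)
  qed
  have coinv: "coinversions n ?X = ?C \<union> (\<lambda>i. (i, i)) ` {k + 1 - y..k}"
  proof (rule set_eqI, clarify)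
    fix i j :: nat
    show "(i, j) \<in> coinversions n ?X \<longleftrightarrow> (i, j) \<in> ?C \<union> (\<lambda>i. (i, i)) ` {k + 1 - y..k}"
      unfolding cap_triangle_coinversion_iff[OF h] using \<open>n = L + k + 1\<close> \<open>x < L\<close> \<open>y < k\<close>
      by (cases "j = 1") (auto simp: g_def h_def)
  qed
  have "finite ?I" "card ?I = triangular k" "finite ?C" "card ?C = triangular L"
    using finite_staircase[of 0 L k] card_staircase[of 0 L k]
      finite_staircase[of k 0 L] card_staircase[of k 0 L] by simp_all
  moreover have "card ((\<lambda>i. (i, 1 :: nat)) ` {1..x}) = x" "card ((\<lambda>i. (i, i)) ` {k + 1 - y..k}) = y"
    using \<open>y < k\<close> by (simp_all add: card_image inj_on_def)
  moreover have "?I \<inter> (\<lambda>i. (i, 1)) ` {1..x} = {}" "?C \<inter> (\<lambda>i. (i, i)) ` {k + 1 - y..k} = {}"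
    using \<open>x < L\<close> by auto
  ultimately have "card (inversions n ?X) = triangular k + x" "card (coinversions n ?X) = triangular L + y"
    unfolding inv coinv by (simp_all add: card_Un_disjoint)
  then show ?thesis
    using cap_triangle_gog[OF g h] L_def by blast
qed

lemma A_n_Suc_cases:
  assumes "1 \<le> m" "(p, q) \<in> A_n (Suc m)"
  obtains (left) "m \<le> p" "(p - m, q) \<in> A_n m"
    | (right) "m \<le> q" "(q - m, p) \<in> A_n m"
    | (near_corner) k where "triangular k \<le> p" "p - triangular k < m - k"
        "triangular (m - k) \<le> q" "q - triangular (m - k) < k"
proof -
  obtain k where k: "k < Suc m" "triangular k \<le> p" "triangular (m - k) \<le> q" "p + q \<le> triangular m"
    using assms(2) mem_A_n_iff[of "Suc m" p q] by auto
  have tri_pred: "triangular (j - 1) + j = triangular j" if "1 \<le> j" for j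
    using triangular_Suc[of "j - 1"] that by simp
  consider "1 \<le> k" "triangular (k - 1) + m \<le> p"
    | "k < m" "triangular (m - 1 - k) + m \<le> q"
    | "p - triangular k < m - k" "q - triangular (m - k) < k"
  proof (cases "k = 0 \<or> k = m")
    case True
    then show thesis
      using that(1,2) k tri_pred[of m] \<open>1 \<le> m\<close> by auto
  next
    case False
    then show thesis
      using that k tri_pred[of k] tri_pred[of "m - k"] by (simp add: Suc_diff_Suc) linarith
  qed
  then show thesis
  proof cases
    case 1
    have "(p - m, q) \<in> A_n m"
      unfolding mem_A_n_iff[OF \<open>1 \<le> m\<close>] using 1 k tri_pred[of k] tri_pred[of m] \<open>1 \<le> m\<close>
      by (intro exI[of _ "k - 1"]) (auto simp: Suc_diff_Suc)
    then show thesis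
      using left 1 by simp
  next
    case 2
    have "(q - m, p) \<in> A_n m"
      unfolding mem_A_n_iff[OF \<open>1 \<le> m\<close>] using 2 k tri_pred[of m]
      by (intro exI[of _ "m - 1 - k"]) (auto simp: Suc_diff_Suc)
    then show thesis
      using right 2 by simp
  next
    case 3
    then show thesis
      using near_corner k by blast
  qed
qed

lemma A_n_realised:
  assumes "1 \<le> n" "(p, q) \<in> A_n n"
  shows "\<exists>X. gog n X \<and> card (inversions n X) = p \<and> card (coinversions n X) = q"
  using assms
proof (induction n arbitrary: p q rule: nat_induct_at_least)
  case base
  then have "p = 0" "q = 0"
    by (auto simp: mem_A_n_iff)
  moreover have "inversions 1 X = {}" "coinversions 1 X = {}" for X
    by (auto simp: inversions_def coinversions_def)
  ultimately show ?case
    using corner_triangle_gog[of 1 0] by auto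
next
  case (Suc m)
  from \<open>1 \<le> m\<close> \<open>(p, q) \<in> A_n (Suc m)\<close> show ?case
  proof (cases rule: A_n_Suc_cases)
    case left
    then obtain Y where "gog m Y" "card (inversions m Y) = p - m" "card (coinversions m Y) = q"
      using Suc.IH by blast
    then show ?thesis
      using extend_left_gog card_inversions_extend_left card_coinversions_extend_left left
      by (intro exI[of _ "extend_left m Y"]) auto
  next
    case right
    then obtain Y where "gog m Y" "card (inversions m Y) = q - m" "card (coinversions m Y) = p"
      using Suc.IH by blast
    then show ?thesis
      using reflect_gog[OF extend_left_gog] card_inversions_reflect card_coinversions_reflect
        card_inversions_extend_left card_coinversions_extend_left right
      by (intro exI[of _ "reflect (Suc m) (extend_left m Y)"]) auto
  next
    case (near_corner k)
    then show ?thesis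
      using near_corner_gog_exists[of "p - triangular k" "Suc m" k "q - triangular (m - k)"] by simp
  qed
qed

lemma corner_counts_iff:
  assumes "1 \<le> n" "k < n"
  shows "gog n X \<and> card (inversions n X) = triangular k \<and> card (coinversions n X) = triangular (n - 1 - k)
    \<longleftrightarrow> X = corner_triangle n k"
proof -
  have "(triangular k, triangular (n - 1 - k)) \<in> A_n n"
    unfolding mem_A_n_iff[OF assms(1)] using assms(2) triangular_add_le[of k "n - 1 - k"]
    by (intro exI[of _ k]) simp
  then obtain Y where "gog n Y" "card (inversions n Y) = triangular k"
      "card (coinversions n Y) = triangular (n - 1 - k)"
    using A_n_realised[OF assms(1)] by blast
  moreover from this have "Y = corner_triangle n k"
    using gog_eq_corner_triangle assms(2) by blast
  ultimately show ?thesis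
    using gog_eq_corner_triangle assms(2) by blast
qed

theorem theorem11p1:
  fixes n :: nat
  assumes "n \<ge> 1"
  shows "(\<forall>i j. (\<exists>X. gog n X \<and> card (inversions n X) = i \<and> card (coinversions n X) = j)
              \<longleftrightarrow> (i, j) \<in> A_n n)
       \<and> (\<forall>k. k \<le> n - 1 \<longrightarrow>
            (\<exists>!X. gog n X \<and> card (inversions n X) = k * (k + 1) div 2
                   \<and> card (coinversions n X) = (n - k - 1) * (n - k) div 2)
          \<and> (\<forall>X. gog n X \<and> card (inversions n X) = k * (k + 1) div 2
                   \<and> card (coinversions n X) = (n - k - 1) * (n - k) div 2
                   \<longrightarrow> X 1 1 = int (n - k)))"
proof (intro conjI allI impI)
  fix i j
  show "(\<exists>X. gog n X \<and> card (inversions n X) = i \<and> card (coinversions n X) = j) \<longleftrightarrow> (i, j) \<in> A_n n"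
    using gog_counts_mem_A_n[OF _ assms] A_n_realised[OF assms] by blast
next
  fix k assume "k \<le> n - 1"
  then have "k < n"
    using assms by simp
  have counts: "k * (k + 1) div 2 = triangular k" "(n - k - 1) * (n - k) div 2 = triangular (n - 1 - k)"
    using triangular_diff_eq[OF \<open>k < n\<close>] by (simp_all add: triangular_def)
  show "\<exists>!X. gog n X \<and> card (inversions n X) = k * (k + 1) div 2
                   \<and> card (coinversions n X) = (n - k - 1) * (n - k) div 2"
    unfolding counts corner_counts_iff[OF assms \<open>k < n\<close>] by simp
  show "gog n X \<and> card (inversions n X) = k * (k + 1) div 2
          \<and> card (coinversions n X) = (n - k - 1) * (n - k) div 2 \<Longrightarrow> X 1 1 = int (n - k)" for X
    unfolding counts corner_counts_iff[OF assms \<open>k < n\<close>] using corner_triangle_bottom[OF \<open>k < n\<close>]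
    by simp
qed

end
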